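(* Let $p>1$, $N\ge1$ and $M\in\mathbb R$. If $u$ is a ground state of (E) with $u(0)=1$, then there exists a constant $c_{N,p,M}>0$ such that for all $r>0$, $u(r)\le\min\{1,c_{N,p,M}r^{-\frac{2}{p-1}}\}$ and $|u_r(r)|\le c_{N,p,M}r^{-\frac{p+1}{p-1}}$.
   Context: (E) denotes the ODE $-u_{rr}-\frac{N-1}{r}u_r=|u|^{p-1}u+M|u_r|^{\frac{2p}{p+1}}$ for $r>0$. A ground state is a nonnegative $u\in C^2([0,\infty))$ with $u_r(0)=0$ solving (E) on $(0,\infty)$. *)

theory Defs
  imports "HOL-Analysis.Analysis"
begin

definition ground_state :: "nat \<Rightarrow> real \<Rightarrow> real \<Rightarrow> (real \<Rightarrow> real) \<Rightarrow> bool" where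
  "ground_state N p M u \<longleftrightarrow>
     (\<forall>r\<ge>0. u r \<ge> 0) \<and>
     (\<exists>u1 u2.
        (\<forall>r\<ge>0. (u has_real_derivative u1 r) (at r within {0..})) \<and>
        (\<forall>r\<ge>0. (u1 has_real_derivative u2 r) (at r within {0..})) \<and>
        continuous_on {0..} u2 \<and>
        u1 0 = 0 \<and>
        (\<forall>r>0. - u2 r - (real N - 1) / r * u1 r
                 = \<bar>u r\<bar> powr (p - 1) * u r + M * \<bar>u1 r\<bar> powr (2 * p / (p + 1))))"

end

theory Submission
  imports Defs
begin

text \<open>
  Since u'(0) = 0, a Gronwall argument on the set where u' > 0 shows u' \<le> 0, so u decreases from 1.
  The equation is invariant under u(r) \<mapsto> l^alpha u(l r) with alpha = 2/(p-1), and the decay of u is a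
  quantitative form of this invariance. If U = u(rho) is large at the scale rho, i.e. rho U^beta with
  beta = 1/alpha is large, then on [rho/2, rho] the term u^p \<ge> U^p dominates the equation until -u'
  reaches kappa U^(beta+1), which makes u(3 rho/4) much larger than U. This is impossible at a point
  rho where s^alpha u(s) is maximal on [1, r], which bounds r^alpha u(r). For the gradient, when
  M \<ge> 0 the function r^(N-1) u' is nonincreasing and one integrates u' over [r, 2r]; when M \<le> 0 one
  has -u'' \<le> u^p and integrates over [r/2, r].
\<close>

lemma DERIV_le_imp_diff_le:
  fixes f f' :: "real \<Rightarrow> real"
  assumes "a \<le> b" and "continuous_on {a..b} f"
    and "\<And>x. a < x \<Longrightarrow> x < b \<Longrightarrow> (f has_real_derivative f' x) (at x)"
    and "\<And>x. a < x \<Longrightarrow> x < b \<Longrightarrow> f' x \<le> k"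
  shows "f b - f a \<le> k * (b - a)"
proof -
  have "f b - k * b \<le> f a - k * a"
  proof (rule DERIV_nonpos_imp_decreasing_open[OF assms(1)])
    fix x assume "a < x" "x < b"
    then show "\<exists>y. ((\<lambda>x. f x - k * x) has_real_derivative y) (at x) \<and> y \<le> 0"
      using assms(3,4) by (intro exI[of _ "f' x - k"]) (auto intro!: derivative_eq_intros)
  qed (use assms(2) in \<open>intro continuous_intros\<close>)
  then show ?thesis by (simp add: algebra_simps)
qed

lemma DERIV_ge_imp_diff_ge:
  fixes f f' :: "real \<Rightarrow> real"
  assumes "a \<le> b" and "continuous_on {a..b} f"
    and "\<And>x. a < x \<Longrightarrow> x < b \<Longrightarrow> (f has_real_derivative f' x) (at x)"
    and "\<And>x. a < x \<Longrightarrow> x < b \<Longrightarrow> k \<le> f' x"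
  shows "k * (b - a) \<le> f b - f a"
proof -
  have "(- f b) - (- f a) \<le> (- k) * (b - a)"
    by (rule DERIV_le_imp_diff_le[where f' = "\<lambda>x. - f' x"])
      (use assms in \<open>auto intro: continuous_on_minus DERIV_minus\<close>)
  then show ?thesis by simp
qed

lemma DERIV_nonneg_below_level_imp_less:
  fixes f f' :: "real \<Rightarrow> real"
  assumes "a \<le> b" and cont: "continuous_on {a..b} f"
    and der: "\<And>x. a < x \<Longrightarrow> x < b \<Longrightarrow> (f has_real_derivative f' x) (at x)"
    and nonneg: "\<And>x. a < x \<Longrightarrow> x < b \<Longrightarrow> f x < K \<Longrightarrow> 0 \<le> f' x"
    and "f b < K"
  shows "f a < K"
proof (rule ccontr)
  assume "\<not> f a < K"
  define S where "S = {a..b} \<inter> f -` {K..}"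
  have "closed S" unfolding S_def by (rule continuous_closed_preimage[OF cont]) auto
  moreover have "a \<in> S" using \<open>\<not> f a < K\<close> \<open>a \<le> b\<close> by (auto simp: S_def)
  moreover have "bdd_above S" unfolding S_def by (rule bdd_aboveI[of _ b]) auto
  ultimately have "Sup S \<in> S" and "a \<le> Sup S" using closed_contains_Sup cSup_upper by blast+
  define s where "s = Sup S"
  have "s \<in> S" "a \<le> s" unfolding s_def by fact+
  have below: "f x < K" if "s < x" "x \<le> b" for x
    using that \<open>a \<le> s\<close> cSup_upper[OF _ \<open>bdd_above S\<close>, of x] by (force simp: S_def s_def)
  have "f b - f s \<ge> 0 * (b - s)"
  proof (rule DERIV_ge_imp_diff_ge[where f' = f'])
    show "continuous_on {s..b} f" by (rule continuous_on_subset[OF cont]) (use \<open>a \<le> s\<close> in auto)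
  qed (use \<open>s \<in> S\<close> \<open>a \<le> s\<close> der nonneg below in \<open>auto simp: S_def\<close>)
  then show False using \<open>s \<in> S\<close> \<open>f b < K\<close> by (simp add: S_def)
qed

lemma DERIV_le_linear_imp_pos_backward:
  fixes g g' :: "real \<Rightarrow> real"
  assumes "a \<le> b" and cont: "continuous_on {a..b} g"
    and der: "\<And>x. a < x \<Longrightarrow> x < b \<Longrightarrow> (g has_real_derivative g' x) (at x)"
    and linear: "\<And>x. a < x \<Longrightarrow> x < b \<Longrightarrow> 0 < g x \<Longrightarrow> g' x \<le> L * g x"
    and "0 < g b"
  shows "0 < g a"
proof -
  let ?f = "\<lambda>x. - (g x * exp (- L * x))"
  have "?f a < 0"
  proof (rule DERIV_nonneg_below_level_imp_less[where f = ?f and f' = "\<lambda>x. (L * g x - g' x) * exp (- L * x)"])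
    fix x assume x: "a < x" "x < b"
    show "(?f has_real_derivative (L * g x - g' x) * exp (- L * x)) (at x)"
      using der[OF x] by (auto intro!: derivative_eq_intros simp: algebra_simps)
  next
    fix x assume x: "a < x" "x < b" and "?f x < 0"
    then show "0 \<le> (L * g x - g' x) * exp (- L * x)"
      using linear[OF x] by (simp add: zero_less_mult_iff)
  next
    show "continuous_on {a..b} ?f" using cont by (intro continuous_intros)
  qed (use assms in auto)
  then show ?thesis by (simp add: zero_less_mult_iff)
qed

lemma DERIV_ge_below_level_imp_ge:
  fixes g g' :: "real \<Rightarrow> real"
  assumes "a \<le> b" and cont: "continuous_on {a..b} g"
    and der: "\<And>x. a < x \<Longrightarrow> x < b \<Longrightarrow> (g has_real_derivative g' x) (at x)"
    and slope: "\<And>x. a < x \<Longrightarrow> x < b \<Longrightarrow> g x < V \<Longrightarrow> k \<le> g' x"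
    and "0 \<le> k" and "V \<le> g a + k * (b - a)"
  shows "V \<le> g b"
proof (rule ccontr)
  assume "\<not> V \<le> g b"
  have below: "g x < V" if "a \<le> x" "x \<le> b" for x
  proof (rule DERIV_nonneg_below_level_imp_less[OF \<open>x \<le> b\<close>])
    show "continuous_on {x..b} g" by (rule continuous_on_subset[OF cont]) (use that in auto)
  qed (use that der slope \<open>0 \<le> k\<close> \<open>\<not> V \<le> g b\<close> in \<open>force+\<close>)
  have "k * (b - a) \<le> g b - g a"
    by (rule DERIV_ge_imp_diff_ge[OF \<open>a \<le> b\<close> cont der]) (use slope below in auto)
  with \<open>\<not> V \<le> g b\<close> \<open>V \<le> g a + k * (b - a)\<close> show False by simp
qed

locale ground_state_params =
  fixes N :: nat and p M :: real
  assumes p_gt_1: "1 < p" and N_ge_1: "1 \<le> N"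
begin

definition q :: real where "q = 2 * p / (p + 1)"
definition alpha :: real where "alpha = 2 / (p - 1)"
definition beta :: real where "beta = (p - 1) / 2"
definition kappa :: real where "kappa = 1 / (4 * \<bar>M\<bar> + 4)"
definition critical_slope :: "real \<Rightarrow> real" where "critical_slope U = kappa * U powr (beta + 1)"
definition lambda0 :: real where "lambda0 = 4 * 2 powr alpha / kappa + 8 * real N * kappa + 1"
definition A0 :: real where "A0 = lambda0 powr alpha"
definition bound :: real where
  "bound = 2 ^ (N - 1) * A0 + 2 powr (alpha + 1) * A0 + A0 powr p * 2 powr (alpha * p)"

lemma q_gt_1: "1 < q"
  using p_gt_1 by (simp add: q_def field_simps)

lemma alpha_pos: "0 < alpha"
  using p_gt_1 by (simp add: alpha_def)

lemma alpha_beta: "alpha * beta = 1"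
  using p_gt_1 by (simp add: alpha_def beta_def)

lemma alpha_times_p: "alpha * p = alpha + 2"
  using p_gt_1 by (simp add: alpha_def field_simps)

lemma beta_plus_1_times_q: "(beta + 1) * q = p"
  using p_gt_1 by (simp add: beta_def q_def field_simps)

lemma kappa_pos: "0 < kappa"
  by (simp add: kappa_def add_pos_nonneg)

lemma kappa_le_1: "kappa \<le> 1"
  by (simp add: kappa_def)

lemma abs_M_times_kappa_le: "\<bar>M\<bar> * kappa \<le> 1 / 4"
  by (simp add: kappa_def field_simps)

lemma drift_term_le:
  assumes "0 < U" and "8 * real N * kappa \<le> \<rho> * U powr beta"
  shows "8 * real N * critical_slope U \<le> \<rho> * U powr p"
proof -
  have "U powr p = U powr beta * U powr (beta + 1)"
    by (simp add: powr_add[symmetric] beta_def)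
  then show ?thesis
    using mult_right_mono[OF assms(2), of "U powr (beta + 1)"] by (simp add: critical_slope_def mult_ac)
qed

lemma gradient_term_le:
  assumes "0 < U"
  shows "\<bar>M\<bar> * critical_slope U powr q \<le> U powr p / 4"
proof -
  have "critical_slope U powr q = kappa powr q * U powr p"
    using kappa_pos \<open>0 < U\<close>
    by (simp only: critical_slope_def powr_mult powr_powr beta_plus_1_times_q less_imp_le powr_ge_zero)
  also have "\<dots> \<le> kappa * U powr p"
    using powr_mono'[of 1 q kappa] kappa_pos kappa_le_1 q_gt_1 by (intro mult_right_mono) auto
  finally have "\<bar>M\<bar> * critical_slope U powr q \<le> (\<bar>M\<bar> * kappa) * U powr p"
    by (simp add: mult_left_mono mult.assoc)
  also have "\<dots> \<le> U powr p / 4"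
    using mult_right_mono[OF abs_M_times_kappa_le, of "U powr p"] by simp
  finally show ?thesis .
qed

lemma lambda0_ge_1: "1 \<le> lambda0"
  using kappa_pos by (simp add: lambda0_def)

lemma lambda0_ge_drift: "8 * real N * kappa \<le> lambda0"
  using kappa_pos by (simp add: lambda0_def)

lemma lambda0_ge_growth: "4 * 2 powr alpha / kappa \<le> lambda0"
  using kappa_pos by (simp add: lambda0_def)

lemma A0_ge_1: "1 \<le> A0"
  unfolding A0_def using lambda0_ge_1 alpha_pos by (simp add: ge_one_powr_ge_zero)

lemma A0_le_bound: "A0 \<le> bound"
proof -
  have "A0 \<le> 2 ^ (N - 1) * A0" using A0_ge_1 by simp
  moreover have "0 \<le> 2 powr (alpha + 1) * A0" using A0_ge_1 by simp
  ultimately show ?thesis unfolding bound_def by (simp add: add_increasing2)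
qed

lemma bound_pos: "0 < bound"
  using A0_le_bound A0_ge_1 by simp

end

locale normalized_ground_state = ground_state_params +
  fixes u u1 u2 :: "real \<Rightarrow> real"
  assumes nonneg: "\<And>r. 0 \<le> r \<Longrightarrow> 0 \<le> u r"
    and u_deriv: "\<And>r. 0 \<le> r \<Longrightarrow> (u has_real_derivative u1 r) (at r within {0..})"
    and u1_deriv: "\<And>r. 0 \<le> r \<Longrightarrow> (u1 has_real_derivative u2 r) (at r within {0..})"
    and u1_0: "u1 0 = 0"
    and ode: "\<And>r. 0 < r \<Longrightarrow>
      - u2 r - (real N - 1) / r * u1 r = u r powr p + M * \<bar>u1 r\<bar> powr (2 * p / (p + 1))"
    and u_0: "u 0 = 1"
begin

lemma u_has_deriv: "0 < r \<Longrightarrow> (u has_real_derivative u1 r) (at r)"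
  using u_deriv[of r] at_within_interior[of r "{0..}"] by simp

lemma u1_has_deriv: "0 < r \<Longrightarrow> (u1 has_real_derivative u2 r) (at r)"
  using u1_deriv[of r] at_within_interior[of r "{0..}"] by simp

lemma continuous_on_u: "{a..b} \<subseteq> {0..} \<Longrightarrow> continuous_on {a..b} u"
  using DERIV_continuous[OF u_deriv] continuous_on_eq_continuous_within continuous_within_subset
  by (metis atLeast_iff subsetD)

lemma continuous_on_u1: "{a..b} \<subseteq> {0..} \<Longrightarrow> continuous_on {a..b} u1"
  using DERIV_continuous[OF u1_deriv] continuous_on_eq_continuous_within continuous_within_subset
  by (metis atLeast_iff subsetD)

lemma minus_u2_eq: "0 < r \<Longrightarrow> - u2 r = (real N - 1) / r * u1 r + u r powr p + M * \<bar>u1 r\<bar> powr q"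
  using ode[of r] by (simp add: q_def algebra_simps)

lemma u1_nonpos:
  assumes "0 \<le> r" shows "u1 r \<le> 0"
proof (rule ccontr)
  assume "\<not> u1 r \<le> 0"
  with u1_0 assms have "0 < r" "0 < u1 r" by (auto simp: order_le_less)
  have cont: "continuous_on {0..r} u1" by (rule continuous_on_u1) auto
  have "continuous_on {0..r} (\<lambda>x. \<bar>u1 x\<bar>)" using cont by (intro continuous_intros)
  then obtain x0 where max: "\<And>y. y \<in> {0..r} \<Longrightarrow> \<bar>u1 y\<bar> \<le> \<bar>u1 x0\<bar>"
    using continuous_attains_sup[of "{0..r}" "\<lambda>x. \<bar>u1 x\<bar>"] \<open>0 < r\<close> by (auto simp: Ball_def)
  define L where "L = \<bar>M\<bar> * \<bar>u1 x0\<bar> powr (q - 1)"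
  have "0 < u1 0"
  proof (rule DERIV_le_linear_imp_pos_backward[OF _ cont u1_has_deriv])
    fix x assume x: "0 < x" "x < r" and "0 < u1 x"
    have "0 \<le> (real N - 1) / x * u1 x" using N_ge_1 x \<open>0 < u1 x\<close> by simp
    moreover have "- M * u1 x powr q \<le> \<bar>M\<bar> * u1 x powr q" by (intro mult_right_mono) auto
    ultimately have "u2 x \<le> \<bar>M\<bar> * u1 x powr q"
      using minus_u2_eq[OF x(1), unfolded abs_of_pos[OF \<open>0 < u1 x\<close>]] powr_ge_zero[of "u x" p]
      by linarith
    also have "\<dots> = \<bar>M\<bar> * u1 x powr (q - 1) * u1 x"
      using \<open>0 < u1 x\<close> powr_mult_base[of "u1 x" "q - 1"] by (simp add: mult_ac)
    also have "\<dots> \<le> L * u1 x"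
      unfolding L_def using max[of x] x \<open>0 < u1 x\<close> q_gt_1
      by (intro mult_right_mono mult_left_mono powr_mono2) auto
    finally show "u2 x \<le> L * u1 x" .
  qed (use \<open>0 < r\<close> \<open>0 < u1 r\<close> in auto)
  then show False using u1_0 by simp
qed

lemma u_antimono: "0 \<le> s \<Longrightarrow> s \<le> t \<Longrightarrow> u t \<le> u s"
  using DERIV_le_imp_diff_le[of s t u u1 0] continuous_on_u u_has_deriv u1_nonpos by simp

lemma u_le_1: "0 \<le> r \<Longrightarrow> u r \<le> 1"
  using u_antimono[of 0 r] u_0 by simp

lemma minus_u2_ge_if_below_critical_slope:
  assumes "0 < \<rho>" and "0 < u \<rho>" and large: "8 * real N * kappa \<le> \<rho> * u \<rho> powr beta"
    and s: "\<rho> / 2 < s" "s < \<rho>" and below: "- u1 s < critical_slope (u \<rho>)"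
  shows "u \<rho> powr p / 2 \<le> - u2 s"
proof -
  define V where "V = critical_slope (u \<rho>)"
  have "0 < s" using s \<open>0 < \<rho>\<close> by simp
  have "(real N - 1) * (- u1 s) / s \<le> real N * V / (\<rho> / 2)"
    using s N_ge_1 u1_nonpos[of s] below \<open>0 < s\<close> by (intro frac_le mult_mono) (auto simp: V_def)
  also have "\<dots> \<le> u \<rho> powr p / 4"
    using drift_term_le[OF \<open>0 < u \<rho>\<close> large] \<open>0 < \<rho>\<close> by (simp add: V_def field_simps)
  finally have "- ((real N - 1) / s * u1 s) \<le> u \<rho> powr p / 4" by simp
  moreover have "- (M * \<bar>u1 s\<bar> powr q) \<le> \<bar>M\<bar> * V powr q"
  proof -
    have "\<bar>u1 s\<bar> powr q \<le> V powr q"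
      using u1_nonpos[of s] \<open>0 < s\<close> below q_gt_1 by (intro powr_mono2) (auto simp: V_def)
    then have "\<bar>M\<bar> * \<bar>u1 s\<bar> powr q \<le> \<bar>M\<bar> * V powr q" by (simp add: mult_left_mono)
    moreover have "- (M * \<bar>u1 s\<bar> powr q) \<le> \<bar>M\<bar> * \<bar>u1 s\<bar> powr q"
      using mult_right_mono[of "- M" "\<bar>M\<bar>" "\<bar>u1 s\<bar> powr q"] by simp
    ultimately show ?thesis by linarith
  qed
  moreover have "u \<rho> powr p \<le> u s powr p"
    using u_antimono[of s \<rho>] nonneg[of \<rho>] s \<open>0 < s\<close> p_gt_1 by (intro powr_mono2) auto
  ultimately show ?thesis
    using minus_u2_eq[OF \<open>0 < s\<close>] gradient_term_le[OF \<open>0 < u \<rho>\<close>] by (simp add: V_def)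
qed

lemma minus_u1_ge_critical_slope:
  assumes "0 < \<rho>" and "0 < u \<rho>" and large: "8 * real N * kappa \<le> \<rho> * u \<rho> powr beta"
    and s: "3 * \<rho> / 4 \<le> s" "s \<le> \<rho>"
  shows "critical_slope (u \<rho>) \<le> - u1 s"
proof (rule DERIV_ge_below_level_imp_ge[where g = "\<lambda>x. - u1 x" and g' = "\<lambda>x. - u2 x" and a = "\<rho> / 2"
    and k = "u \<rho> powr p / 2"])
  show "continuous_on {\<rho> / 2..s} (\<lambda>x. - u1 x)"
    using \<open>0 < \<rho>\<close> by (intro continuous_intros continuous_on_u1) auto
  show "((\<lambda>x. - u1 x) has_real_derivative - u2 x) (at x)" if "\<rho> / 2 < x" "x < s" for x
    using that \<open>0 < \<rho>\<close> by (intro DERIV_minus u1_has_deriv) simp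
  show "u \<rho> powr p / 2 \<le> - u2 x" if "\<rho> / 2 < x" "x < s" "- u1 x < critical_slope (u \<rho>)" for x
    using minus_u2_ge_if_below_critical_slope[OF assms(1-3)] that s by simp
  have "8 * critical_slope (u \<rho>) \<le> 8 * real N * critical_slope (u \<rho>)"
    using N_ge_1 \<open>0 < u \<rho>\<close> kappa_pos by (simp add: critical_slope_def)
  also have "\<dots> \<le> \<rho> * u \<rho> powr p" by (rule drift_term_le[OF \<open>0 < u \<rho>\<close> large])
  also have "\<dots> \<le> 4 * (s - \<rho> / 2) * u \<rho> powr p" using s by (intro mult_right_mono) auto
  also have "\<dots> = 8 * (u \<rho> powr p / 2 * (s - \<rho> / 2))" by simp
  finally show "critical_slope (u \<rho>) \<le> - u1 (\<rho> / 2) + u \<rho> powr p / 2 * (s - \<rho> / 2)"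
    using u1_nonpos[of "\<rho> / 2"] \<open>0 < \<rho>\<close> by linarith
qed (use s in auto)

lemma u_at_three_quarters_ge:
  assumes "0 < \<rho>" and "0 < u \<rho>" and "8 * real N * kappa \<le> \<rho> * u \<rho> powr beta"
  shows "u \<rho> + critical_slope (u \<rho>) * (\<rho> / 4) \<le> u (3 * \<rho> / 4)"
proof -
  have "u \<rho> - u (3 * \<rho> / 4) \<le> (- critical_slope (u \<rho>)) * (\<rho> - 3 * \<rho> / 4)"
  proof (rule DERIV_le_imp_diff_le[OF _ continuous_on_u u_has_deriv])
    fix x assume "3 * \<rho> / 4 < x" "x < \<rho>"
    then show "u1 x \<le> - critical_slope (u \<rho>)" using minus_u1_ge_critical_slope[OF assms, of x] by simp
  qed (use \<open>0 < \<rho>\<close> in auto)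
  then show ?thesis by (simp add: algebra_simps)
qed

lemma amplitude_le_lambda0_at_local_max:
  assumes "0 < \<rho>" and "0 < u \<rho>"
    and local_max: "u (3 * \<rho> / 4) * (3 * \<rho> / 4) powr alpha \<le> u \<rho> * \<rho> powr alpha"
  shows "\<rho> * u \<rho> powr beta \<le> lambda0"
proof (cases "8 * real N * kappa \<le> \<rho> * u \<rho> powr beta")
  case False
  then show ?thesis using lambda0_ge_drift by simp
next
  case True
  define U where "U = u \<rho>"
  define lam where "lam = \<rho> * U powr beta"
  have "U + kappa * lam * U / 4 \<le> u (3 * \<rho> / 4)"
    using u_at_three_quarters_ge[OF assms(1,2) True] \<open>0 < u \<rho>\<close>
    by (simp add: U_def lam_def critical_slope_def powr_add mult_ac)
  also have "\<dots> \<le> U * (4 / 3) powr alpha"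
  proof -
    have "(3 * \<rho> / 4) powr alpha = (3 / 4) powr alpha * \<rho> powr alpha"
      using powr_mult[of "3 / 4" \<rho> alpha] \<open>0 < \<rho>\<close> by simp
    then have "u (3 * \<rho> / 4) * (3 / 4) powr alpha \<le> U"
      using local_max \<open>0 < \<rho>\<close> by (simp add: U_def mult.assoc[symmetric])
    then show ?thesis by (simp add: powr_divide field_simps)
  qed
  also have "\<dots> \<le> U * 2 powr alpha"
    using \<open>0 < u \<rho>\<close> alpha_pos by (intro mult_left_mono powr_mono2) (auto simp: U_def)
  finally have "U * (1 + kappa * lam / 4) \<le> U * 2 powr alpha" by (simp add: algebra_simps)
  then have "kappa * lam \<le> 4 * 2 powr alpha" using \<open>0 < u \<rho>\<close> by (simp add: U_def)
  also have "\<dots> = kappa * (4 * 2 powr alpha / kappa)" using kappa_pos by simp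
  also have "\<dots> \<le> kappa * lambda0" by (rule mult_left_mono[OF lambda0_ge_growth]) (use kappa_pos in simp)
  finally show ?thesis using kappa_pos by (simp add: lam_def U_def)
qed

lemma u_times_powr_le_A0_at_local_max:
  assumes "0 < \<rho>" and local_max: "u (3 * \<rho> / 4) * (3 * \<rho> / 4) powr alpha \<le> u \<rho> * \<rho> powr alpha"
  shows "u \<rho> * \<rho> powr alpha \<le> A0"
proof (cases "u \<rho> = 0")
  case True
  then show ?thesis using A0_ge_1 by simp
next
  case False
  then have "0 < u \<rho>" using nonneg[of \<rho>] \<open>0 < \<rho>\<close> by simp
  have "u \<rho> * \<rho> powr alpha = (\<rho> * u \<rho> powr beta) powr alpha"
    using \<open>0 < \<rho>\<close> \<open>0 < u \<rho>\<close> alpha_beta by (simp add: powr_mult powr_powr mult_ac)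
  also have "\<dots> \<le> A0"
    unfolding A0_def using amplitude_le_lambda0_at_local_max[OF assms(1) \<open>0 < u \<rho>\<close> local_max]
      \<open>0 < \<rho>\<close> \<open>0 < u \<rho>\<close> alpha_pos
    by (intro powr_mono2) auto
  finally show ?thesis .
qed

lemma u_times_powr_le_A0:
  assumes "0 < r" shows "u r * r powr alpha \<le> A0"
proof (cases "r \<le> 1")
  case True
  then have "u r * r powr alpha \<le> 1"
    using u_le_1[of r] nonneg[of r] \<open>0 < r\<close> alpha_pos by (intro mult_le_one powr_le1) auto
  then show ?thesis using A0_ge_1 by simp
next
  case False
  define w where "w s = u s * s powr alpha" for s
  have "continuous_on {1..r} w"
    unfolding w_def by (intro continuous_intros continuous_on_u) auto
  then obtain \<rho> where \<rho>: "1 \<le> \<rho>" "\<rho> \<le> r" and max: "\<And>s. 1 \<le> s \<Longrightarrow> s \<le> r \<Longrightarrow> w s \<le> w \<rho>"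
    using continuous_attains_sup[of "{1..r}" w] False by (auto simp: Ball_def)
  consider "w \<rho> \<le> 1" | "1 < w \<rho>" by linarith
  then have "w \<rho> \<le> A0"
  proof cases
    case 1
    then show ?thesis using A0_ge_1 by simp
  next
    case 2
    have "w (3 * \<rho> / 4) \<le> w \<rho>"
    proof (cases "1 \<le> 3 * \<rho> / 4")
      case True
      then show ?thesis using max \<rho> by simp
    next
      case False
      then have "w (3 * \<rho> / 4) \<le> 1" unfolding w_def
        using u_le_1[of "3 * \<rho> / 4"] nonneg[of "3 * \<rho> / 4"] \<rho> alpha_pos
        by (intro mult_le_one powr_le1) auto
      then show ?thesis using 2 by simp
    qed
    then show ?thesis
      using u_times_powr_le_A0_at_local_max[of \<rho>] \<rho> by (simp add: w_def)
  qed
  then show ?thesis using max[of r] False by (simp add: w_def)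
qed

lemma u_le_decay: "0 < r \<Longrightarrow> u r \<le> A0 * r powr (- alpha)"
  using u_times_powr_le_A0[of r] by (simp add: powr_minus field_simps)

lemma weighted_u1_has_deriv:
  assumes "0 < s"
  shows "((\<lambda>s. s ^ (N - 1) * u1 s) has_real_derivative
           (- (s ^ (N - 1) * (u s powr p + M * \<bar>u1 s\<bar> powr q)))) (at s)"
proof -
  have pred_power: "real (N - 1) * s ^ (N - 1 - 1) = (real N - 1) / s * s ^ (N - 1)"
  proof (cases "N = 1")
    case False
    then have "s ^ (N - 1 - 1) * s = s ^ (N - 1)" using N_ge_1 by (intro power_minus_mult) simp
    then show ?thesis using N_ge_1 \<open>0 < s\<close> by (simp add: of_nat_diff field_simps)
  qed simp
  have "real (N - 1) * s ^ (N - 1 - 1) * u1 s + u2 s * s ^ (N - 1)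
      = s ^ (N - 1) * - (- u2 s - (real N - 1) / s * u1 s)"
    unfolding pred_power by (simp add: algebra_simps)
  also have "\<dots> = - (s ^ (N - 1) * (u s powr p + M * \<bar>u1 s\<bar> powr q))"
    using minus_u2_eq[OF \<open>0 < s\<close>] by (simp add: algebra_simps)
  finally show ?thesis
    using DERIV_mult[OF DERIV_pow u1_has_deriv[OF \<open>0 < s\<close>], of "N - 1"] by simp
qed

lemma u1_bound_if_M_nonneg:
  assumes "0 \<le> M" and "0 < r"
  shows "- u1 r \<le> 2 ^ (N - 1) * A0 * r powr (- alpha - 1)"
proof -
  have "- u1 r \<le> 2 ^ (N - 1) * (- u1 s)" if s: "r \<le> s" "s \<le> 2 * r" for s
  proof -
    have "s ^ (N - 1) * u1 s - r ^ (N - 1) * u1 r \<le> 0 * (s - r)"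
    proof (rule DERIV_le_imp_diff_le[OF \<open>r \<le> s\<close> _ weighted_u1_has_deriv])
      show "continuous_on {r..s} (\<lambda>s. s ^ (N - 1) * u1 s)"
        using \<open>0 < r\<close> by (intro continuous_intros continuous_on_u1) auto
    qed (use \<open>0 < r\<close> \<open>0 \<le> M\<close> in auto)
    then have "r ^ (N - 1) * (- u1 r) \<le> s ^ (N - 1) * (- u1 s)" by simp
    also have "\<dots> \<le> (2 * r) ^ (N - 1) * (- u1 s)"
      using s \<open>0 < r\<close> u1_nonpos[of s] by (intro mult_right_mono power_mono) auto
    finally show ?thesis using \<open>0 < r\<close> by (simp add: power_mult_distrib mult_ac)
  qed
  then have "u (2 * r) - u r \<le> (u1 r / 2 ^ (N - 1)) * (2 * r - r)"
    using \<open>0 < r\<close>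
    by (intro DERIV_le_imp_diff_le[OF _ continuous_on_u u_has_deriv]) (auto simp: field_simps)
  then have "- u1 r * r \<le> 2 ^ (N - 1) * (u r - u (2 * r))" by (simp add: field_simps)
  also have "\<dots> \<le> 2 ^ (N - 1) * u r" using nonneg[of "2 * r"] \<open>0 < r\<close> by simp
  also have "\<dots> \<le> 2 ^ (N - 1) * (A0 * r powr (- alpha))" using u_le_decay[OF \<open>0 < r\<close>] by simp
  finally show ?thesis using \<open>0 < r\<close> by (simp add: powr_diff powr_minus field_simps)
qed

lemma minus_u2_le_if_M_nonpos:
  assumes "M \<le> 0" and "0 < s"
  shows "- u2 s \<le> A0 powr p * s powr (- (alpha * p))"
proof -
  have "u s powr p \<le> (A0 * s powr (- alpha)) powr p"
    using u_le_decay[OF \<open>0 < s\<close>] nonneg[of s] \<open>0 < s\<close> p_gt_1 by (intro powr_mono2) auto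
  also have "\<dots> = A0 powr p * s powr (- (alpha * p))"
    using A0_ge_1 \<open>0 < s\<close> by (simp add: powr_mult powr_powr)
  finally have "u s powr p \<le> A0 powr p * s powr (- (alpha * p))" .
  moreover have "(real N - 1) / s * u1 s \<le> 0"
    using N_ge_1 \<open>0 < s\<close> u1_nonpos[of s] by (intro mult_nonneg_nonpos divide_nonneg_pos) auto
  moreover have "M * \<bar>u1 s\<bar> powr q \<le> 0" using \<open>M \<le> 0\<close> by (simp add: mult_nonpos_nonneg)
  ultimately show ?thesis using minus_u2_eq[OF \<open>0 < s\<close>] by linarith
qed

lemma u1_le_on_left_half_if_M_nonpos:
  assumes "M \<le> 0" and "0 < r" and s: "r / 2 < s" "s < r"
  shows "u1 s \<le> u1 r + A0 powr p * (r / 2) powr (- (alpha * p)) * (r / 2)"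
proof -
  define K where "K = A0 powr p * (r / 2) powr (- (alpha * p))"
  have "- u1 r - - u1 s \<le> K * (r - s)"
  proof (rule DERIV_le_imp_diff_le[where f' = "\<lambda>x. - u2 x"])
    show "continuous_on {s..r} (\<lambda>x. - u1 x)"
      using s \<open>0 < r\<close> by (intro continuous_intros continuous_on_u1) auto
    show "((\<lambda>x. - u1 x) has_real_derivative - u2 x) (at x)" if "s < x" "x < r" for x
      using that s \<open>0 < r\<close> by (intro DERIV_minus u1_has_deriv) simp
    show "- u2 x \<le> K" if "s < x" "x < r" for x
    proof -
      have "- u2 x \<le> A0 powr p * x powr (- (alpha * p))"
        using minus_u2_le_if_M_nonpos[OF \<open>M \<le> 0\<close>] that s \<open>0 < r\<close> by simp
      also have "\<dots> \<le> K"
        unfolding K_def using that s \<open>0 < r\<close> alpha_pos p_gt_1 by (intro mult_left_mono powr_mono2') auto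
      finally show ?thesis .
    qed
  qed (use s in auto)
  moreover have "K * (r - s) \<le> K * (r / 2)"
    using s by (intro mult_left_mono) (auto simp: K_def)
  ultimately show ?thesis by (simp add: K_def)
qed

lemma u1_bound_if_M_nonpos:
  assumes "M \<le> 0" and "0 < r"
  shows "- u1 r \<le> (2 powr (alpha + 1) * A0 + A0 powr p * 2 powr (alpha * p)) * r powr (- alpha - 1)"
proof -
  define K where "K = A0 powr p * (r / 2) powr (- (alpha * p))"
  have "u r - u (r / 2) \<le> (u1 r + K * (r / 2)) * (r - r / 2)"
    using \<open>0 < r\<close> u1_le_on_left_half_if_M_nonpos[OF assms]
    by (intro DERIV_le_imp_diff_le[OF _ continuous_on_u u_has_deriv]) (auto simp: K_def)
  then have "- u1 r * (r / 2) \<le> u (r / 2) + K * (r / 2) * (r / 2)"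
    using nonneg[of r] \<open>0 < r\<close> by (simp add: algebra_simps)
  also have "\<dots> \<le> A0 * (r / 2) powr (- alpha) + K * (r / 2) * (r / 2)"
    using u_le_decay[of "r / 2"] \<open>0 < r\<close> by simp
  finally have "- u1 r \<le> 2 * A0 * (r / 2) powr (- alpha) / r + K * (r / 2)"
    using \<open>0 < r\<close> by (simp add: field_simps)
  also have "2 * A0 * (r / 2) powr (- alpha) / r = 2 powr (alpha + 1) * A0 * r powr (- alpha - 1)"
    using \<open>0 < r\<close> by (simp add: powr_divide powr_minus powr_add powr_diff field_simps)
  also have "K * (r / 2) \<le> A0 powr p * 2 powr (alpha * p) * r powr (- alpha - 1)"
  proof -
    have "r powr (- (alpha * p)) * r = r powr (- (alpha * p) + 1)"
      using \<open>0 < r\<close> powr_add[of r "- (alpha * p)" 1] by simp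
    also have "- (alpha * p) + 1 = - alpha - 1" by (simp add: alpha_times_p)
    finally have "K * (r / 2) = A0 powr p * 2 powr (alpha * p) * r powr (- alpha - 1) / 2"
      using \<open>0 < r\<close> by (simp add: K_def powr_divide powr_minus field_simps)
    then show ?thesis by simp
  qed
  finally show ?thesis by (simp add: algebra_simps)
qed

lemma decay_estimates:
  assumes "0 < r"
  shows "u r \<le> min 1 (bound * r powr (- 2 / (p - 1)))"
    and "\<bar>deriv u r\<bar> \<le> bound * r powr (- (p + 1) / (p - 1))"
proof -
  have "- 2 / (p - 1) = - alpha" by (simp add: alpha_def)
  moreover have "u r \<le> bound * r powr (- alpha)"
    using u_le_decay[OF assms] A0_le_bound by (meson mult_right_mono order_trans powr_ge_zero)
  ultimately show "u r \<le> min 1 (bound * r powr (- 2 / (p - 1)))" using u_le_1[of r] assms by simp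
  have "- (p + 1) / (p - 1) = - alpha - 1" using p_gt_1 by (simp add: alpha_def field_simps)
  moreover have "\<bar>deriv u r\<bar> = - u1 r"
    using DERIV_imp_deriv[OF u_has_deriv[OF assms]] u1_nonpos[of r] assms by simp
  moreover have "- u1 r \<le> bound * r powr (- alpha - 1)"
  proof (cases "0 \<le> M")
    case True
    have "2 ^ (N - 1) * A0 \<le> bound"
      unfolding bound_def using A0_ge_1 by (simp add: add_increasing2)
    then show ?thesis
      using u1_bound_if_M_nonneg[OF True assms] by (meson mult_right_mono order_trans powr_ge_zero)
  next
    case False
    have "2 powr (alpha + 1) * A0 + A0 powr p * 2 powr (alpha * p) \<le> bound"
      unfolding bound_def using A0_ge_1 by simp
    then show ?thesis
      using u1_bound_if_M_nonpos[OF _ assms] False by (meson mult_right_mono order_trans powr_ge_zero linear)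
  qed
  ultimately show "\<bar>deriv u r\<bar> \<le> bound * r powr (- (p + 1) / (p - 1))" by simp
qed

end

lemma ground_state_imp_normalized_ground_state:
  assumes "ground_state N p M u" and "u 0 = 1" and "1 < p" and "1 \<le> N"
  obtains u1 u2 where "normalized_ground_state N p M u u1 u2"
proof -
  obtain u1 u2 where "\<forall>r\<ge>0. 0 \<le> u r"
    and "\<forall>r\<ge>0. (u has_real_derivative u1 r) (at r within {0..})"
    and "\<forall>r\<ge>0. (u1 has_real_derivative u2 r) (at r within {0..})"
    and "u1 0 = 0"
    and "\<forall>r>0. - u2 r - (real N - 1) / r * u1 r
                 = \<bar>u r\<bar> powr (p - 1) * u r + M * \<bar>u1 r\<bar> powr (2 * p / (p + 1))"
    using assms(1) unfolding ground_state_def by blast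
  moreover have "\<bar>u r\<bar> powr (p - 1) * u r = u r powr p" if "0 \<le> r" for r
    using powr_mult_base[of "u r" "p - 1"] \<open>\<forall>r\<ge>0. 0 \<le> u r\<close> that by (simp add: mult.commute)
  ultimately have "normalized_ground_state N p M u u1 u2"
    using assms(2-4) by unfold_locales auto
  then show ?thesis by (rule that)
qed

theorem proposition2p4:
  fixes N :: nat and p M :: real
  assumes "p > 1" and "N \<ge> 1"
  shows "\<exists>c>0. \<forall>u. ground_state N p M u \<and> u 0 = 1 \<longrightarrow>
           (\<forall>r>0. u r \<le> min 1 (c * r powr (- 2 / (p - 1))) \<and>
                  \<bar>deriv u r\<bar> \<le> c * r powr (- (p + 1) / (p - 1)))"
proof -
  interpret ground_state_params N p M using assms by unfold_locales
  have "u r \<le> min 1 (bound * r powr (- 2 / (p - 1)))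
      \<and> \<bar>deriv u r\<bar> \<le> bound * r powr (- (p + 1) / (p - 1))"
    if gs: "ground_state N p M u" "u 0 = 1" and "0 < r" for u r
  proof -
    obtain u1 u2 where "normalized_ground_state N p M u u1 u2"
      using ground_state_imp_normalized_ground_state gs assms by blast
    then interpret normalized_ground_state N p M u u1 u2 .
    show ?thesis using decay_estimates[OF \<open>0 < r\<close>] by simp
  qed
  then show ?thesis using bound_pos by blast
qed

end
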